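(* Let $k$ be a real division algebra, $\mathcal Z\subset k$ a discrete subring closed under conjugation, $(a_n)_{n\ge1}$ a sequence in $\mathcal Z$ and $x_0\in k$ with $x_n=T_{a_n}\cdots T_{a_1}x_0$ defined and $\|x_n\|<1$ for all $n\ge0$. Then for each $n$, \[\|T^{-1}_{a_1}\cdots T^{-1}_{a_n}0-x_0\|=\prod_{i=0}^n\|x_i\|\;\prod_{i=0}^{n-1}\|T^{-1}_{a_{i+1}}\cdots T^{-1}_{a_n}0\|,\] assuming the terms of the latter product are well-defined.
   Context: $k\in\{\mathbb{R},\mathbb{C},\mathbb{H},\mathbb{O}\}$, identified with $\mathbb{R}^d$ with Euclidean norm $\|x\|^2=x\overline x$. For $a\in\mathcal Z$, $T_ax=x^{-1}-a$ and $T_a^{-1}x=(x+a)^{-1}$. Discrete means discrete in $\mathbb{R}^d$. *)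

theory Defs
  imports "HOL-Analysis.Analysis"
begin

text \<open>A real normed division algebra with Euclidean norm: a finite-dimensional real
inner-product space with a unital bilinear multiplication whose Euclidean norm is
multiplicative.  By Hurwitz's theorem these are exactly R, C, H, O (identified with
R^d, d = 1,2,4,8, with the Euclidean norm).  Associativity is NOT assumed, so the
octonions are covered.\<close>

class euclidean_div_algebra = euclidean_space + times + one +
  assumes mult_scaleR_left_eda: "(r *\<^sub>R x) * y = r *\<^sub>R (x * y)"
      and mult_scaleR_right_eda: "x * (r *\<^sub>R y) = r *\<^sub>R (x * y)"
      and distrib_left_eda: "x * (y + z) = x * y + x * z"
      and distrib_right_eda: "(x + y) * z = x * z + y * z"
      and one_mult_eda: "1 * x = x"
      and mult_one_eda: "x * 1 = x"
      and norm_mult_eda: "norm (x * y) = norm x * norm y"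

definition cnj :: "'a::euclidean_div_algebra \<Rightarrow> 'a" where
  "cnj x = (2 * (x \<bullet> 1)) *\<^sub>R 1 - x"

text \<open>Inverse x^{-1} = conj(x) / |x|^2 (only meaningful for x \<noteq> 0).\<close>
definition dinv :: "'a::euclidean_div_algebra \<Rightarrow> 'a" where
  "dinv x = (1 / (norm x)\<^sup>2) *\<^sub>R cnj x"

definition is_subring :: "'a::euclidean_div_algebra set \<Rightarrow> bool" where
  "is_subring Z \<longleftrightarrow> 0 \<in> Z \<and> 1 \<in> Z \<and> (\<forall>x\<in>Z. \<forall>y\<in>Z. x + y \<in> Z \<and> x - y \<in> Z \<and> x * y \<in> Z)"

definition Tmap :: "'a::euclidean_div_algebra \<Rightarrow> 'a \<Rightarrow> 'a" where
  "Tmap a x = dinv x - a"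

definition Tinv :: "'a::euclidean_div_algebra \<Rightarrow> 'a \<Rightarrow> 'a" where
  "Tinv a x = dinv (x + a)"

text \<open>Forward orbit x_n = T_{a_n} ... T_{a_1} x_0 (T_{a_1} applied first).\<close>
definition orbit :: "(nat \<Rightarrow> 'a::euclidean_div_algebra) \<Rightarrow> 'a \<Rightarrow> nat \<Rightarrow> 'a" where
  "orbit a x0 n = fold (\<lambda>j y. Tmap (a j) y) [1..<Suc n] x0"

text \<open>Backward composition T^{-1}_{a_{i+1}} ... T^{-1}_{a_n} 0 (T^{-1}_{a_n} applied first);
equals 0 when i = n.\<close>
definition bwd :: "(nat \<Rightarrow> 'a::euclidean_div_algebra) \<Rightarrow> nat \<Rightarrow> nat \<Rightarrow> 'a" where
  "bwd a n i = foldr (\<lambda>j y. Tinv (a j) y) [Suc i..<Suc n] 0"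

end

theory Submission
  imports Defs
begin

(* Inversion x -> x^-1 = cnj x / |x|^2 is the Euclidean inversion in the unit sphere
   followed by the isometry cnj, so |u^-1 - v^-1| = |u - v| / (|u| |v|).  Since
   x_i = (x_(i+1) + a_(i+1))^-1 and y_i = (y_(i+1) + a_(i+1))^-1 for the backward points
   y_i = T^-1_(a_(i+1)) ... T^-1_(a_n) 0, the common shift a_(i+1) cancels and
   |y_i - x_i| = |x_i| |y_i| |y_(i+1) - x_(i+1)|; telescoping down from y_n = 0 gives the
   identity. *)

lemma norm_inverse_sphere_diff:
  fixes u v :: "'a::real_inner"
  assumes "u \<noteq> 0" and "v \<noteq> 0"
  shows "norm (u /\<^sub>R (norm u)\<^sup>2 - v /\<^sub>R (norm v)\<^sup>2) = norm (u - v) / (norm u * norm v)"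
proof -
  have pos: "norm u > 0" "norm v > 0" using assms by auto
  have "(norm (u /\<^sub>R (norm u)\<^sup>2 - v /\<^sub>R (norm v)\<^sup>2))\<^sup>2
        = 1 / (norm u)\<^sup>2 + 1 / (norm v)\<^sup>2 - 2 * (u \<bullet> v) / ((norm u)\<^sup>2 * (norm v)\<^sup>2)"
    using pos by (simp add: power2_norm_eq_inner inner_diff_left inner_diff_right
        inner_commute field_simps)
  also have "\<dots> = ((norm v)\<^sup>2 + (norm u)\<^sup>2 - 2 * (u \<bullet> v)) / ((norm u)\<^sup>2 * (norm v)\<^sup>2)"
    using pos by (simp add: field_simps)
  also have "(norm v)\<^sup>2 + (norm u)\<^sup>2 - 2 * (u \<bullet> v) = (norm (u - v))\<^sup>2"
    by (simp add: power2_norm_eq_inner inner_diff_left inner_diff_right inner_commute)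
  also have "\<dots> / ((norm u)\<^sup>2 * (norm v)\<^sup>2) = (norm (u - v) / (norm u * norm v))\<^sup>2"
    by (simp add: power_divide power_mult_distrib)
  finally show ?thesis
    using pos by (simp add: power2_eq_iff_nonneg)
qed

lemma zero_mult_eda: "(0::'a::euclidean_div_algebra) * x = 0"
  using mult_scaleR_left_eda[of 0 "0::'a" x] by simp

lemma one_neq_zero_eda: "(1::'a::euclidean_div_algebra) \<noteq> 0"
proof
  assume "(1::'a) = 0"
  then have "b = 0" for b :: 'a
    using one_mult_eda[of b] zero_mult_eda[of b] by simp
  then show False
    using nonempty_Basis nonzero_Basis by blast
qed

lemma norm_one_eda: "norm (1::'a::euclidean_div_algebra) = 1"
  using norm_mult_eda[of "1::'a" 1] one_neq_zero_eda[where 'a='a]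
  by (simp add: one_mult_eda)

lemma inner_one_one_eda: "(1::'a::euclidean_div_algebra) \<bullet> 1 = 1"
  using norm_one_eda[where 'a='a] by (simp add: norm_eq_sqrt_inner)

lemma cnj_diff: "cnj (x - y) = cnj x - cnj (y::'a::euclidean_div_algebra)"
  unfolding cnj_def by (simp add: inner_diff_left algebra_simps)

lemma cnj_scaleR: "cnj (r *\<^sub>R x) = r *\<^sub>R cnj (x::'a::euclidean_div_algebra)"
  unfolding cnj_def by (simp add: algebra_simps)

lemma cnj_cnj: "cnj (cnj x) = (x::'a::euclidean_div_algebra)"
  unfolding cnj_def by (simp add: inner_diff_left inner_one_one_eda algebra_simps)

lemma inner_cnj: "cnj x \<bullet> cnj y = x \<bullet> (y::'a::euclidean_div_algebra)"
  unfolding cnj_def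
  by (simp add: inner_diff_left inner_diff_right inner_one_one_eda inner_commute algebra_simps)

lemma norm_cnj: "norm (cnj x) = norm (x::'a::euclidean_div_algebra)"
  by (simp add: norm_eq_sqrt_inner inner_cnj)

lemma dinv_eq_cnj_inverse_sphere: "dinv x = cnj (x /\<^sub>R (norm x)\<^sup>2)"
  unfolding dinv_def by (simp add: cnj_scaleR divide_inverse)

lemma norm_dinv: "norm (dinv x) = 1 / norm (x::'a::euclidean_div_algebra)"
  unfolding dinv_def by (simp add: norm_cnj power2_eq_square)

lemma dinv_dinv:
  assumes "(x::'a::euclidean_div_algebra) \<noteq> 0"
  shows "dinv (dinv x) = x"
proof -
  have "dinv (dinv x) = ((norm x)\<^sup>2 * (1 / (norm x)\<^sup>2)) *\<^sub>R x"
    unfolding dinv_def[of "dinv x"] norm_dinv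
    by (simp add: dinv_def power_divide cnj_scaleR cnj_cnj)
  then show ?thesis
    using assms by simp
qed

lemma norm_dinv_diff:
  assumes "(u::'a::euclidean_div_algebra) \<noteq> 0" and "v \<noteq> 0"
  shows "norm (dinv u - dinv v) = norm (u - v) / (norm u * norm v)"
  using norm_inverse_sphere_diff[OF assms]
  by (simp add: dinv_eq_cnj_inverse_sphere cnj_diff[symmetric] norm_cnj)

lemma orbit_0: "orbit a x0 0 = x0"
  unfolding orbit_def by simp

lemma orbit_Suc: "orbit a x0 (Suc m) = Tmap (a (Suc m)) (orbit a x0 m)"
  unfolding orbit_def by simp

lemma bwd_self: "bwd a n n = 0"
  unfolding bwd_def by simp

lemma bwd_step: "i < n \<Longrightarrow> bwd a n i = Tinv (a (Suc i)) (bwd a n (Suc i))"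
  unfolding bwd_def by (subst upt_conv_Cons) auto

lemma norm_bwd_diff_orbit:
  fixes a :: "nat \<Rightarrow> 'a::euclidean_div_algebra"
  assumes "i \<le> n"
    and orbit_nonzero: "\<And>j. j < n \<Longrightarrow> orbit a x0 j \<noteq> 0"
    and shift_nonzero: "\<And>j. j < n \<Longrightarrow> bwd a n (Suc j) + a (Suc j) \<noteq> 0"
  shows "norm (bwd a n i - orbit a x0 i) =
           (\<Prod>j=i..n. norm (orbit a x0 j)) * (\<Prod>j\<in>{i..<n}. norm (bwd a n j))"
  using \<open>i \<le> n\<close>
proof (induction i rule: inc_induct)
  case base
  then show ?case by (simp add: bwd_self)
next
  case (step i)
  define u where "u = bwd a n (Suc i) + a (Suc i)"
  define v where "v = orbit a x0 (Suc i) + a (Suc i)"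
  have "orbit a x0 i \<noteq> 0"
    using orbit_nonzero step.hyps by simp
  then have x_i: "orbit a x0 i = dinv v" and "v \<noteq> 0"
    unfolding v_def orbit_Suc Tmap_def
    using norm_dinv[of "orbit a x0 i"] by (auto simp: dinv_dinv)
  have y_i: "bwd a n i = dinv u"
    unfolding u_def using bwd_step[OF step.hyps(2)] by (simp add: Tinv_def)
  have "u - v = bwd a n (Suc i) - orbit a x0 (Suc i)"
    unfolding u_def v_def by simp
  have "u \<noteq> 0"
    unfolding u_def using shift_nonzero step.hyps by simp
  have "norm (bwd a n i - orbit a x0 i) = norm (u - v) / (norm u * norm v)"
    unfolding x_i y_i using \<open>u \<noteq> 0\<close> \<open>v \<noteq> 0\<close> by (rule norm_dinv_diff)
  also have "\<dots> = (norm (orbit a x0 i) * (\<Prod>j=Suc i..n. norm (orbit a x0 j))) *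
                   (norm (bwd a n i) * (\<Prod>j\<in>{Suc i..<n}. norm (bwd a n j)))"
    unfolding x_i y_i norm_dinv \<open>u - v = _\<close> step.IH by simp
  also have "\<dots> = (\<Prod>j=i..n. norm (orbit a x0 j)) * (\<Prod>j\<in>{i..<n}. norm (bwd a n j))"
    using step.hyps by (simp add: prod.atLeast_Suc_atMost prod.atLeast_Suc_lessThan)
  finally show ?case .
qed

theorem lemma1p4:
  fixes Z :: "'a::euclidean_div_algebra set"
    and a :: "nat \<Rightarrow> 'a" and x0 :: 'a and n :: nat
  assumes "is_subring Z" and "discrete Z" and "\<forall>z\<in>Z. cnj z \<in> Z"
      and "\<forall>j\<ge>1. a j \<in> Z"
      and "\<forall>m. orbit a x0 m \<noteq> 0 \<and> norm (orbit a x0 m) < 1"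
      and "\<forall>i<n. bwd a n (Suc i) + a (Suc i) \<noteq> 0"
  shows "norm (bwd a n 0 - x0) =
           (\<Prod>i=0..n. norm (orbit a x0 i)) * (\<Prod>i<n. norm (bwd a n i))"
  using norm_bwd_diff_orbit[of 0 n a x0] assms(5,6)
  by (simp add: orbit_0 atLeast0LessThan)

end
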